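(* Let $m\geq2$. For $0\leq k\leq q$ let $\mathcal{S}_k=\{\omega_{ij}\in\mathcal{S}: i+j\equiv k \pmod{q+1}\}$ and $W_k=\operatorname{Span}_{\mathbb{F}}\mathcal{S}_k$. Then each $W_k$ is an $\mathbb{F}[G]$-submodule of $H^0(C,\Omega_C^{\otimes m})$, and $$H^0(C,\Omega_C^{\otimes m})=\bigoplus_{k=0}^{q}W_k.$$
   Context: Let $p$ be an odd prime, $q=p^r$ ($r\geq1$), $\mathbb{F}$ algebraically closed of characteristic $p$, $C$ the Drinfeld curve $XY^q-X^qY-Z^{q+1}=0$ in $\mathbb{P}^2(\mathbb{F})$, and $G=SL_2(\mathbb{F}_q)$ acting on $C$ by $\begin{pmatrix}\alpha&\beta\\ \gamma&\delta\end{pmatrix}\cdot[X:Y:Z]=[\alpha X+\beta Y:\gamma X+\delta Y:Z]$, hence on $H^0(C,\Omega_C^{\otimes m})$ via $f(x,y)dx^{\otimes m}\cdot\sigma=f(\alpha x+\beta y,\gamma x+\delta y)d(\alpha x+\beta y)^{\otimes m}$, where $x=X/Z,y=Y/Z$. Put $\omega_{ij}=\frac{x^iy^j}{x^{mq}}dx^{\otimes m}$ and $\mathcal{S}=\{\omega_{ij}: 0\leq j\leq q-1,\ i\geq0,\ i+j\leq m(q-2)\}\cup\{\omega_{0j}: q\leq j\leq m(q-2)\}$ (a basis of $H^0(C,\Omega_C^{\otimes m})$). *)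

theory Defs
  imports "HOL-Computational_Algebra.Polynomial"
begin

(* Affine points of the Drinfeld curve  X Y^q - X^q Y - Z^(q+1) = 0  in the chart Z = 1.
   On these points x <> 0 and y <> 0 automatically. *)
definition drinfeld_pts :: "nat \<Rightarrow> ('a::field \<times> 'a) set" where
  "drinfeld_pts q = {(x, y). x * y ^ q - x ^ q * y = 1}"

(* An m-differential  f dx^{\<otimes>m}  is represented by its coefficient f, viewed as a
   function on the (Zariski dense) affine part of C; we normalise it to 0 off the curve. *)
type_synonym 'a mdiff = "'a \<times> 'a \<Rightarrow> 'a"

definition omega :: "nat \<Rightarrow> nat \<Rightarrow> nat \<Rightarrow> nat \<Rightarrow> 'a::field mdiff" where
  "omega m q i j = (\<lambda>(x, y). if (x, y) \<in> drinfeld_pts q then x ^ i * y ^ j / x ^ (m * q) else 0)"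

definition S_idx :: "nat \<Rightarrow> nat \<Rightarrow> (nat \<times> nat) set" where
  "S_idx m q = {(i, j). j \<le> q - 1 \<and> i + j \<le> m * (q - 2)}
             \<union> {(i, j). i = 0 \<and> q \<le> j \<and> j \<le> m * (q - 2)}"

definition S_set :: "nat \<Rightarrow> nat \<Rightarrow> 'a::field mdiff set" where
  "S_set m q = (\<lambda>(i, j). omega m q i j) ` S_idx m q"

definition S_part :: "nat \<Rightarrow> nat \<Rightarrow> nat \<Rightarrow> 'a::field mdiff set" where
  "S_part m q k = (\<lambda>(i, j). omega m q i j) ` {(i, j) \<in> S_idx m q. (i + j) mod (q + 1) = k}"

definition Fspan :: "'a::field mdiff set \<Rightarrow> 'a mdiff set" where
  "Fspan A = {(\<lambda>z. \<Sum>w\<in>T. c w * w z) | T c. finite T \<and> T \<subseteq> A}"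

definition H0 :: "nat \<Rightarrow> nat \<Rightarrow> 'a::field mdiff set" where
  "H0 m q = Fspan (S_set m q)"

definition W :: "nat \<Rightarrow> nat \<Rightarrow> nat \<Rightarrow> 'a::field mdiff set" where
  "W m q k = Fspan (S_part m q k)"

definition SL2q :: "nat \<Rightarrow> ('a::field \<times> 'a \<times> 'a \<times> 'a) set" where
  "SL2q q = {(a, b, c, d). a ^ q = a \<and> b ^ q = b \<and> c ^ q = c \<and> d ^ q = d \<and> a * d - b * c = 1}"

(* f(x,y) dx^m . sigma = f(ax+by, cx+dy) d(ax+by)^m, and on C one has dy = (y/x)^q dx
   (differentiate x y^q - x^q y = 1 in characteristic p), so
   d(ax+by) = (a + b (y/x)^q) dx. *)
definition act :: "nat \<Rightarrow> nat \<Rightarrow> ('a::field \<times> 'a \<times> 'a \<times> 'a) \<Rightarrow> 'a mdiff \<Rightarrow> 'a mdiff" where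
  "act m q \<sigma> f = (case \<sigma> of (a, b, c, d) \<Rightarrow>
     (\<lambda>(x, y). if (x, y) \<in> drinfeld_pts q
        then f (a * x + b * y, c * x + d * y) * (a + b * (y / x) ^ q) ^ m else 0))"

end

(*
  Reducing with x y^q = x^q y + 1 on the curve writes every \<omega>_ij with i + j \<le> m(q - 2) as a
  combination of elements of S with the same residue of i + j mod (q + 1).  An element of
  SL_2(F_q) commutes with the q-th power Frobenius, so it sends \<omega>_ij to a combination of
  \<omega>_st with s + t = i + j; hence every W_k is G-stable.  The sum is direct because a
  (q + 1)-st root of unity \<zeta>, acting by (x, y) \<mapsto> (\<zeta>x, \<zeta>y), multiplies W_k by \<zeta>^(k+m);
  as p does not divide q + 1 there are q + 1 such \<zeta>, and a polynomial of degree \<le> q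
  vanishing at all of them is zero.
*)
theory Submission
  imports Defs "HOL-Computational_Algebra.Primes"
begin

lemma Fspan_induct [consumes 1, case_names zero base add smult]:
  assumes "f \<in> Fspan A"
    and "P (\<lambda>_. 0)"
    and "\<And>w. w \<in> A \<Longrightarrow> P w"
    and "\<And>f g. P f \<Longrightarrow> P g \<Longrightarrow> P (\<lambda>z. f z + g z)"
    and "\<And>c f. P f \<Longrightarrow> P (\<lambda>z. c * f z)"
  shows "P f"
proof -
  obtain T c where f: "f = (\<lambda>z. \<Sum>w\<in>T. c w * w z)" and "finite T" "T \<subseteq> A"
    using assms(1) unfolding Fspan_def by blast
  from \<open>finite T\<close> \<open>T \<subseteq> A\<close> have "P (\<lambda>z. \<Sum>w\<in>T. c w * w z)"
  proof (induction T rule: finite_induct)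
    case (insert w T)
    then show ?case using assms(3-5) by simp
  qed (simp add: assms(2))
  with f show ?thesis by simp
qed

lemma Fspan_zero: "(\<lambda>_. 0) \<in> Fspan A"
  unfolding Fspan_def by (auto intro!: exI[of _ "{}"])

lemma Fspan_base: "w \<in> A \<Longrightarrow> w \<in> Fspan A"
  unfolding Fspan_def by (auto intro!: exI[of _ "{w}"] exI[of _ "\<lambda>_. 1"])

lemma Fspan_add:
  assumes "f \<in> Fspan A" "g \<in> Fspan A"
  shows "(\<lambda>z. f z + g z) \<in> Fspan A"
proof -
  obtain T c where f: "f = (\<lambda>z. \<Sum>w\<in>T. c w * w z)" "finite T" "T \<subseteq> A"
    using assms(1) unfolding Fspan_def by blast
  obtain T' c' where g: "g = (\<lambda>z. \<Sum>w\<in>T'. c' w * w z)" "finite T'" "T' \<subseteq> A"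
    using assms(2) unfolding Fspan_def by blast
  define e where "e w = (if w \<in> T then c w else 0) + (if w \<in> T' then c' w else 0)" for w
  have "(\<Sum>w\<in>T \<union> T'. e w * w z) = f z + g z" for z
    unfolding e_def distrib_right sum.distrib f g if_distrib[of "\<lambda>a. a * w z" for w]
    by (simp add: sum.If_cases f(2) g(2) Int_absorb1 Int_absorb2)
  then show ?thesis
    unfolding Fspan_def using f(2,3) g(2,3) by (auto intro!: exI[of _ "T \<union> T'"] exI[of _ e])
qed

lemma Fspan_smult: "f \<in> Fspan A \<Longrightarrow> (\<lambda>z. c * f z) \<in> Fspan A"
  unfolding Fspan_def by (auto simp: sum_distrib_left mult.assoc intro!: exI[of _ "\<lambda>w. c * _ w"])

lemma Fspan_diff:
  "f \<in> Fspan A \<Longrightarrow> g \<in> Fspan A \<Longrightarrow> (\<lambda>z. f z - g z) \<in> Fspan A"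
  using Fspan_add[OF _ Fspan_smult[of g A "- 1"]] by simp

lemma Fspan_sum:
  "finite I \<Longrightarrow> (\<And>i. i \<in> I \<Longrightarrow> f i \<in> Fspan A) \<Longrightarrow> (\<lambda>z. \<Sum>i\<in>I. f i z) \<in> Fspan A"
  by (induction I rule: finite_induct) (auto intro: Fspan_zero Fspan_add)

lemma Fspan_mono: "A \<subseteq> B \<Longrightarrow> Fspan A \<subseteq> Fspan B"
  unfolding Fspan_def by blast

lemma Fspan_UN_decomposition:
  assumes "h \<in> Fspan (\<Union>k\<in>K. A k)" and "finite K"
  shows "\<exists>w. (\<forall>k\<in>K. w k \<in> Fspan (A k)) \<and> h = (\<lambda>z. \<Sum>k\<in>K. w k z)"
  using assms
proof (induction rule: Fspan_induct)
  case zero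
  show ?case by (auto intro!: exI[of _ "\<lambda>_ _. 0"] Fspan_zero)
next
  case (base v)
  then obtain k0 where "k0 \<in> K" "v \<in> A k0" by blast
  moreover have "v = (\<lambda>z. \<Sum>k\<in>K. (if k = k0 then v else (\<lambda>_. 0)) z)"
    using \<open>finite K\<close> \<open>k0 \<in> K\<close> by (simp add: if_distrib[of "\<lambda>f. f _"] cong: if_cong)
  ultimately show ?case
    by (intro exI[of _ "\<lambda>k. if k = k0 then v else (\<lambda>_. 0)"]) (auto intro: Fspan_base Fspan_zero)
next
  case (add f g)
  then obtain wf wg where "\<forall>k\<in>K. wf k \<in> Fspan (A k)" "f = (\<lambda>z. \<Sum>k\<in>K. wf k z)"
    and "\<forall>k\<in>K. wg k \<in> Fspan (A k)" "g = (\<lambda>z. \<Sum>k\<in>K. wg k z)" by blast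
  then show ?case
    by (auto simp: sum.distrib intro!: exI[of _ "\<lambda>k z. wf k z + wg k z"] Fspan_add)
next
  case (smult c f)
  then obtain wf where "\<forall>k\<in>K. wf k \<in> Fspan (A k)" "f = (\<lambda>z. \<Sum>k\<in>K. wf k z)" by blast
  then show ?case
    by (auto simp: sum_distrib_left intro!: exI[of _ "\<lambda>k z. c * wf k z"] Fspan_smult)
qed

lemma card_roots_separable:
  fixes P :: "'a::alg_closed_field poly"
  assumes "P \<noteq> 0" and separable: "\<And>a. poly P a = 0 \<Longrightarrow> poly (pderiv P) a \<noteq> 0"
  shows "card {a. poly P a = 0} = degree P"
proof -
  obtain A where A: "size A = degree P" "P = smult (lead_coeff P) (\<Prod>x\<in>#A. [:-x, 1:])"
    using alg_closed_imp_factorization[OF assms(1)] by blast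
  have roots: "{a. poly P a = 0} = set_mset A"
    using assms(1) by (subst A(2)) (auto simp: poly_prod_mset)
  have "count A a \<le> 1" for a
  proof (rule ccontr)
    assume "\<not> count A a \<le> 1"
    then have "a \<in># A" "a \<in># A - {#a#}"
      by (simp_all add: in_diff_count flip: count_greater_zero_iff)
    then obtain B where "A = add_mset a (add_mset a B)"
      by (metis insert_DiffM)
    then obtain Q where P: "P = [:-a, 1:] * ([:-a, 1:] * Q)"
      using A(2) by (intro that[of "smult (lead_coeff P) (\<Prod>x\<in>#B. [:-x, 1:])"]) (simp add: mult_ac)
    have "poly P a = 0" "poly (pderiv P) a = 0"
      by (simp_all only: P pderiv_mult poly_mult poly_add) simp_all
    with separable show False by blast
  qed
  then have "mset_set (set_mset A) = A"
    by (intro multiset_eqI) (simp add: count_mset_set' le_antisym flip: count_greater_zero_iff)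
  then have "card (set_mset A) = size A"
    by (metis size_mset_set)
  with roots A(1) show ?thesis
    by simp
qed

lemma card_roots_of_unity:
  assumes "n > 0" and "of_nat n \<noteq> (0::'a::alg_closed_field)"
  shows "card {z::'a. z ^ n = 1} = n"
proof -
  define P :: "'a poly" where "P = monom 1 n + [:-1:]"
  have poly_P: "poly P z = z ^ n - 1" for z
    by (simp add: P_def poly_monom)
  have deg: "degree P = n"
    using assms(1) unfolding P_def by (simp add: degree_add_eq_left degree_monom_eq)
  have "pderiv P = monom (of_nat n) (n - 1)"
    by (simp add: P_def pderiv_add pderiv_monom pderiv_pCons)
  then have "poly (pderiv P) z \<noteq> 0" if "poly P z = 0" for z
    using that assms by (auto simp: poly_P poly_monom power_0_left)
  then have "card {z. poly P z = 0} = n"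
    using card_roots_separable[of P] deg assms(1) by fastforce
  then show ?thesis
    by (simp add: poly_P)
qed

lemma drinfeld_pts_iff: "(x, y) \<in> drinfeld_pts q \<longleftrightarrow> x * y ^ q - x ^ q * y = 1"
  by (simp add: drinfeld_pts_def)

lemma drinfeld_pts_fst_nonzero: "q > 0 \<Longrightarrow> (x, y) \<in> drinfeld_pts q \<Longrightarrow> (x::'a::field) \<noteq> 0"
  by (auto simp: drinfeld_pts_iff zero_power)

lemma omega_apply:
  "omega m q i j (x, y) = (if (x, y) \<in> drinfeld_pts q then x ^ i * y ^ j / x ^ (m * q) else 0)"
  by (simp add: omega_def)

lemma omega_reduce:
  "omega m q (Suc i) (j + q) = (\<lambda>z. omega m q (i + q) (Suc j) z + omega m q i j z :: 'a::field)"
proof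
  fix z :: "'a \<times> 'a"
  obtain x y where z: "z = (x, y)" by fastforce
  have "x ^ Suc i * y ^ (j + q) = x ^ (i + q) * y ^ Suc j + x ^ i * y ^ j"
    if "(x, y) \<in> drinfeld_pts q"
  proof -
    from that have "x * y ^ q = x ^ q * y + 1"
      by (simp add: drinfeld_pts_iff algebra_simps)
    then have "x ^ i * y ^ j * (x * y ^ q) = x ^ i * y ^ j * (x ^ q * y + 1)"
      by simp
    then show ?thesis
      by (simp add: power_add algebra_simps)
  qed
  then show "omega m q (Suc i) (j + q) z = omega m q (i + q) (Suc j) z + omega m q i j z"
    by (simp add: z omega_apply add_divide_distrib)
qed

lemma omega_in_W:
  assumes "i + j \<le> m * (q - 2)"
  shows "(omega m q i j :: 'a::field mdiff) \<in> W m q ((i + j) mod (q + 1))"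
  using assms
proof (induction j arbitrary: i rule: less_induct)
  case (less j)
  show ?case
  proof (cases "j < q \<or> i = 0")
    case True
    with less.prems have "(i, j) \<in> S_idx m q"
      by (auto simp: S_idx_def)
    then show ?thesis
      unfolding W_def S_part_def by (auto intro!: Fspan_base)
  next
    case False
    then obtain i' j' where ij: "i = Suc i'" "j = j' + q"
      by (metis add.commute le_add_diff_inverse not0_implies_Suc not_less)
    have "m * (q - 2) \<noteq> 0"
      using less.prems ij by linarith
    then have "q \<ge> 2"
      by simp
    have "i + j = (i' + j') + (q + 1)"
      using ij by simp
    then have "(i' + j') mod (q + 1) = (i + j) mod (q + 1)"
      by (simp only: mod_add_self2)
    then have "omega m q i' j' \<in> (W m q ((i + j) mod (q + 1)) :: 'a mdiff set)"
      using less.IH[of j' i'] less.prems ij \<open>q \<ge> 2\<close> by simp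
    moreover have "omega m q (i' + q) (Suc j') \<in> (W m q ((i + j) mod (q + 1)) :: 'a mdiff set)"
      using less.IH[of "Suc j'" "i' + q"] less.prems ij \<open>q \<ge> 2\<close> by (simp add: ac_simps)
    ultimately show ?thesis
      unfolding ij omega_reduce W_def by (simp add: Fspan_add)
  qed
qed

lemma SL2q_maps_drinfeld_pts:
  fixes a b c d :: "'a::field"
  assumes "prime CHAR('a)" and "q = CHAR('a) ^ r"
    and "(a, b, c, d) \<in> SL2q q" and "(x, y) \<in> drinfeld_pts q"
  shows "(a * x + b * y, c * x + d * y) \<in> drinfeld_pts q"
proof -
  have frob: "(a * x + b * y) ^ q = a * x ^ q + b * y ^ q" "(c * x + d * y) ^ q = c * x ^ q + d * y ^ q"
    using assms(3) by (simp_all add: SL2q_def freshmans_dream'[OF assms(1,2)] power_mult_distrib)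
  have "(a * x + b * y) * (c * x + d * y) ^ q - (a * x + b * y) ^ q * (c * x + d * y)
      = (a * d - b * c) * (x * y ^ q - x ^ q * y)"
    unfolding frob by (simp add: algebra_simps)
  with assms(3,4) show ?thesis
    by (simp add: SL2q_def drinfeld_pts_iff)
qed

text \<open>On the curve, \<open>d(ax + by) = (ax + by)\<^sup>q / x\<^sup>q dx\<close>, which cancels the denominator of
  \<open>\<omega>\<^sub>i\<^sub>j\<close> evaluated at the image point.\<close>
lemma act_omega:
  fixes a b c d :: "'a::field"
  assumes "prime CHAR('a)" and "q = CHAR('a) ^ r" and "(a, b, c, d) \<in> SL2q q"
  shows "act m q (a, b, c, d) (omega m q i j) =
    (\<lambda>z. \<Sum>s\<le>i. \<Sum>t\<le>j. (of_nat (i choose s) * a ^ s * b ^ (i - s) * of_nat (j choose t) * c ^ t * d ^ (j - t))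
          * omega m q (s + t) ((i - s) + (j - t)) z)"
proof
  fix z :: "'a \<times> 'a"
  obtain x y where z: "z = (x, y)" by fastforce
  show "act m q (a, b, c, d) (omega m q i j) z = (\<Sum>s\<le>i. \<Sum>t\<le>j. (of_nat (i choose s) * a ^ s * b ^ (i - s) * of_nat (j choose t) * c ^ t * d ^ (j - t))
          * omega m q (s + t) ((i - s) + (j - t)) z)"
  proof (cases "(x, y) \<in> drinfeld_pts q")
    case False
    then show ?thesis by (simp add: z act_def omega_apply)
  next
    case True
    define u where "u = a * x + b * y"
    define v where "v = c * x + d * y"
    have "q > 0"
      using assms(1,2) prime_gt_0_nat by simp
    have uv: "(u, v) \<in> drinfeld_pts q"
      unfolding u_def v_def by (rule SL2q_maps_drinfeld_pts[OF assms True])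
    have x: "x \<noteq> 0" and u: "u \<noteq> 0"
      using drinfeld_pts_fst_nonzero[OF \<open>q > 0\<close>] True uv by blast+
    have "a + b * (y / x) ^ q = u ^ q / x ^ q"
      using assms(3) x unfolding u_def
      by (simp add: SL2q_def freshmans_dream'[OF assms(1,2)] power_mult_distrib power_divide field_simps)
    then have "act m q (a, b, c, d) (omega m q i j) z = u ^ i * v ^ j / u ^ (m * q) * (u ^ q / x ^ q) ^ m"
      using True uv by (simp add: z act_def omega_apply u_def v_def)
    also have "\<dots> = u ^ i * v ^ j / x ^ (m * q)"
      using u x by (simp add: power_divide power_mult[symmetric] mult.commute)
    also have "\<dots> = (\<Sum>s\<le>i. \<Sum>t\<le>j. of_nat (i choose s) * (a * x) ^ s * (b * y) ^ (i - s) *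
               (of_nat (j choose t) * (c * x) ^ t * (d * y) ^ (j - t)) / x ^ (m * q))"
      unfolding u_def v_def binomial_ring by (simp add: sum_product sum_divide_distrib)
    also have "\<dots> = (\<Sum>s\<le>i. \<Sum>t\<le>j. (of_nat (i choose s) * a ^ s * b ^ (i - s) * of_nat (j choose t) * c ^ t * d ^ (j - t))
          * omega m q (s + t) ((i - s) + (j - t)) z)"
      unfolding z omega_apply if_P[OF True] power_add by (simp add: power_mult_distrib mult_ac)
    finally show ?thesis .
  qed
qed

lemma act_zero: "act m q \<sigma> (\<lambda>_. 0) = (\<lambda>_. 0)"
  by (auto simp: act_def split: prod.splits)

lemma act_add: "act m q \<sigma> (\<lambda>z. f z + g z) = (\<lambda>z. act m q \<sigma> f z + act m q \<sigma> g z)"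
  by (auto simp: act_def distrib_right split: prod.splits)

lemma act_smult: "act m q \<sigma> (\<lambda>z. c * f z) = (\<lambda>z. c * act m q \<sigma> f z)"
  by (auto simp: act_def mult.assoc split: prod.splits)

lemma act_S_part_in_W:
  fixes \<sigma> :: "'a::field \<times> 'a \<times> 'a \<times> 'a"
  assumes "prime CHAR('a)" and "q = CHAR('a) ^ r" and "\<sigma> \<in> SL2q q" and "w \<in> S_part m q k"
  shows "act m q \<sigma> w \<in> W m q k"
proof -
  obtain a b c d where \<sigma>: "\<sigma> = (a, b, c, d)"
    by (cases \<sigma>) auto
  obtain i j where ij: "(i, j) \<in> S_idx m q" "(i + j) mod (q + 1) = k" "w = omega m q i j"
    using assms(4) unfolding S_part_def by auto
  have "omega m q (s + t) ((i - s) + (j - t)) \<in> (W m q k :: 'a mdiff set)" if "s \<le> i" "t \<le> j" for s t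
    using omega_in_W[of "s + t" "(i - s) + (j - t)" m] that ij(1,2)
    by (auto simp: S_idx_def)
  then show ?thesis
    unfolding ij(3) \<sigma> act_omega[OF assms(1,2) assms(3)[unfolded \<sigma>]] W_def
    by (auto intro!: Fspan_sum Fspan_smult)
qed

lemma act_W:
  fixes \<sigma> :: "'a::field \<times> 'a \<times> 'a \<times> 'a"
  assumes "prime CHAR('a)" and "q = CHAR('a) ^ r" and "\<sigma> \<in> SL2q q" and "f \<in> W m q k"
  shows "act m q \<sigma> f \<in> W m q k"
  using assms(4) unfolding W_def
proof (induction rule: Fspan_induct)
  case zero
  then show ?case by (simp add: act_zero Fspan_zero)
next
  case (base w)
  then show ?case using act_S_part_in_W[OF assms(1-3)] by (simp add: W_def)
next
  case (add f g)
  then show ?case by (simp add: act_add Fspan_add)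
next
  case (smult c f)
  then show ?case by (simp add: act_smult Fspan_smult)
qed

lemma drinfeld_pts_scale:
  assumes "\<zeta> ^ (q + 1) = (1::'a::field)"
  shows "(\<zeta> * x, \<zeta> * y) \<in> drinfeld_pts q \<longleftrightarrow> (x, y) \<in> drinfeld_pts q"
proof -
  have "(\<zeta> * x) * (\<zeta> * y) ^ q - (\<zeta> * x) ^ q * (\<zeta> * y) = \<zeta> ^ (q + 1) * (x * y ^ q - x ^ q * y)"
    by (simp add: power_mult_distrib algebra_simps)
  with assms show ?thesis
    by (simp add: drinfeld_pts_iff)
qed

lemma omega_scale:
  assumes "\<zeta> ^ (q + 1) = (1::'a::field)"
  shows "omega m q i j (\<zeta> * x, \<zeta> * y) = \<zeta> ^ (i + j + m) * omega m q i j (x, y)"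
proof -
  have "\<zeta> ^ (m * q) * \<zeta> ^ m = (\<zeta> ^ (q + 1)) ^ m"
    by (simp add: power_add[symmetric] power_mult[symmetric] algebra_simps)
  then have "\<zeta> ^ (m * q) * \<zeta> ^ m = 1"
    using assms by simp
  then have "inverse (\<zeta> ^ (m * q)) = \<zeta> ^ m"
    by (rule inverse_unique)
  then have "\<zeta> ^ (i + j) / \<zeta> ^ (m * q) = \<zeta> ^ (i + j + m)"
    by (simp add: divide_inverse power_add)
  moreover have "(\<zeta> * x) ^ i * (\<zeta> * y) ^ j / (\<zeta> * x) ^ (m * q)
      = \<zeta> ^ (i + j) / \<zeta> ^ (m * q) * (x ^ i * y ^ j / x ^ (m * q))"
    by (simp add: power_mult_distrib power_add mult_ac)
  ultimately show ?thesis
    by (simp add: omega_apply drinfeld_pts_scale[OF assms])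
qed

lemma W_scale:
  assumes "\<zeta> ^ (q + 1) = (1::'a::field)" and "f \<in> W m q k"
  shows "f (\<zeta> * x, \<zeta> * y) = \<zeta> ^ (k + m) * f (x, y)"
proof -
  have "\<forall>x y. f (\<zeta> * x, \<zeta> * y) = \<zeta> ^ (k + m) * f (x, y)"
    using assms(2) unfolding W_def
  proof (induction rule: Fspan_induct)
    case (base w)
    then obtain i j where ij: "(i + j) mod (q + 1) = k" "w = omega m q i j"
      unfolding S_part_def by auto
    have "\<zeta> ^ (i + j) = (\<zeta> ^ (q + 1)) ^ ((i + j) div (q + 1)) * \<zeta> ^ k"
      unfolding ij(1)[symmetric] power_mult[symmetric] power_add[symmetric] mult_div_mod_eq ..
    then have "\<zeta> ^ (i + j) = \<zeta> ^ k"
      using assms(1) by simp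
    then show ?case
      using omega_scale[OF assms(1)] ij(2) by (simp add: power_add)
  qed (simp_all add: algebra_simps)
  then show ?thesis
    by blast
qed

lemma W_sum_eq_zero:
  fixes d :: "nat \<Rightarrow> 'a::alg_closed_field mdiff"
  assumes "of_nat (q + 1) \<noteq> (0::'a)"
    and "\<And>k. k \<le> q \<Longrightarrow> d k \<in> W m q k" and "\<And>z. (\<Sum>k\<le>q. d k z) = 0" and "k \<le> q"
  shows "d k = (\<lambda>_. 0)"
proof
  fix z :: "'a \<times> 'a"
  obtain x y where z: "z = (x, y)" by fastforce
  define R :: "'a poly" where "R = (\<Sum>k\<le>q. monom (d k (x, y)) k)"
  have coeff_R: "coeff R n = (if n \<le> q then d n (x, y) else 0)" for n
    unfolding R_def coeff_sum coeff_monom by (simp add: sum.delta)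
  have "poly R \<zeta> = 0" if "\<zeta> ^ (q + 1) = 1" for \<zeta>
  proof -
    have "\<zeta> ^ m * poly R \<zeta> = (\<Sum>k\<le>q. d k (\<zeta> * x, \<zeta> * y))"
      unfolding R_def poly_sum poly_monom sum_distrib_left
      by (intro sum.cong refl) (simp add: W_scale[OF that assms(2)] power_add mult_ac)
    then show ?thesis
      using that assms(3) by (auto simp: power_0_left)
  qed
  then have "{\<zeta>. \<zeta> ^ (q + 1) = 1} \<subseteq> {\<zeta>. poly R \<zeta> = 0}"
    by blast
  have "R = 0"
  proof (rule ccontr)
    assume "R \<noteq> 0"
    have "q + 1 = card {\<zeta>::'a. \<zeta> ^ (q + 1) = 1}"
      using card_roots_of_unity[OF _ assms(1)] by simp
    also have "\<dots> \<le> card {\<zeta>. poly R \<zeta> = 0}"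
      by (rule card_mono[OF poly_roots_finite[OF \<open>R \<noteq> 0\<close>]]) fact
    also have "\<dots> \<le> degree R"
      by (rule card_poly_roots_bound[OF \<open>R \<noteq> 0\<close>])
    also have "\<dots> \<le> q"
      by (rule degree_le) (simp add: coeff_R)
    finally show False
      by simp
  qed
  then show "d k z = 0"
    using coeff_R[of k] assms(4) by (simp add: z)
qed

lemma S_set_eq_UN_S_part: "S_set m q = (\<Union>k\<le>q. S_part m q k)"
proof -
  have "S_idx m q = (\<Union>k\<le>q. {(i, j) \<in> S_idx m q. (i + j) mod (q + 1) = k})"
    by (fastforce simp: less_Suc_eq_le[symmetric])
  then show ?thesis
    unfolding S_set_def S_part_def image_UN[symmetric] by simp
qed

lemma H0_decomposition:
  assumes "h \<in> H0 m q"
  shows "\<exists>w. (\<forall>k\<le>q. w k \<in> W m q k) \<and> (\<forall>k>q. w k = (\<lambda>_. 0)) \<and> h = (\<lambda>z. \<Sum>k\<le>q. w k z)"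
proof -
  obtain w where "\<forall>k\<le>q. w k \<in> W m q k" "h = (\<lambda>z. \<Sum>k\<le>q. w k z)"
    using Fspan_UN_decomposition[where A = "S_part m q" and K = "{..q}"] assms
    unfolding H0_def W_def S_set_eq_UN_S_part by auto
  then show ?thesis
    by (intro exI[of _ "\<lambda>k. if k \<le> q then w k else (\<lambda>_. 0)"]) auto
qed

lemma W_decomposition_unique:
  fixes w w' :: "nat \<Rightarrow> 'a::alg_closed_field mdiff"
  assumes "of_nat (q + 1) \<noteq> (0::'a)"
    and "\<forall>k\<le>q. w k \<in> W m q k" "\<forall>k>q. w k = (\<lambda>_. 0)"
    and "\<forall>k\<le>q. w' k \<in> W m q k" "\<forall>k>q. w' k = (\<lambda>_. 0)"
    and "(\<lambda>z. \<Sum>k\<le>q. w k z) = (\<lambda>z. \<Sum>k\<le>q. w' k z)"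
  shows "w = w'"
proof
  fix k
  show "w k = w' k"
  proof (cases "k \<le> q")
    case True
    have "(\<lambda>z. w k z - w' k z) = (\<lambda>_. 0)"
    proof (rule W_sum_eq_zero[OF assms(1) _ _ True])
      show "(\<lambda>z. w k z - w' k z) \<in> W m q k" if "k \<le> q" for k
        using assms(2,4) that unfolding W_def by (simp add: Fspan_diff)
      show "(\<Sum>k\<le>q. w k z - w' k z) = 0" for z
        using fun_cong[OF assms(6), of z] by (simp add: sum_subtractf)
    qed
    then show ?thesis
      by (simp add: fun_eq_iff)
  next
    case False
    with assms(3,5) show ?thesis
      by simp
  qed
qed

theorem mainTheorem4:
  fixes p r q m :: nat
  assumes "prime p" and "odd p" and "r \<ge> 1" and "q = p ^ r"
    and "CHAR('a::alg_closed_field) = p"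
    and "m \<ge> 2"
  shows "(\<forall>k\<le>q.
            W m q k \<subseteq> (H0 m q :: 'a mdiff set)
          \<and> (\<lambda>_. 0) \<in> (W m q k :: 'a mdiff set)
          \<and> (\<forall>f::'a mdiff\<in>W m q k. \<forall>g\<in>W m q k. (\<lambda>z. f z + g z) \<in> W m q k)
          \<and> (\<forall>c::'a. \<forall>f\<in>W m q k. (\<lambda>z. c * f z) \<in> W m q k)
          \<and> (\<forall>\<sigma>\<in>(SL2q q :: ('a \<times> 'a \<times> 'a \<times> 'a) set). \<forall>f\<in>W m q k. act m q \<sigma> f \<in> W m q k))
       \<and> (\<forall>h\<in>(H0 m q :: 'a mdiff set). \<exists>!w :: nat \<Rightarrow> 'a mdiff.
            (\<forall>k\<le>q. w k \<in> W m q k) \<and> (\<forall>k>q. w k = (\<lambda>_. 0))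
            \<and> h = (\<lambda>z. \<Sum>k\<le>q. w k z))"
proof -
  \<comment> \<open>\<open>odd p\<close> and \<open>m \<ge> 2\<close> only serve, in the paper, to make \<open>S\<close> a basis; here \<open>H0\<close> is its span.\<close>
  have char: "prime CHAR('a)" "q = CHAR('a) ^ r"
    using assms(1,4,5) by simp_all
  have "p dvd q"
    using assms(3,4) by (simp add: dvd_power)
  with assms(1) have "\<not> CHAR('a) dvd q + 1"
    using dvd_add_right_iff[of p q 1] by (auto simp: assms(5))
  then have q1: "of_nat (q + 1) \<noteq> (0::'a)"
    by (simp only: of_nat_eq_0_iff_char_dvd not_False_eq_True)
  have "W m q k \<subseteq> (H0 m q :: 'a mdiff set)" for k
    unfolding W_def H0_def S_set_def S_part_def by (rule Fspan_mono) auto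
  moreover have "\<exists>!w. (\<forall>k\<le>q. w k \<in> W m q k) \<and> (\<forall>k>q. w k = (\<lambda>_. 0)) \<and> h = (\<lambda>z. \<Sum>k\<le>q. w k z)"
    if "h \<in> (H0 m q :: 'a mdiff set)" for h
    using H0_decomposition[OF that] W_decomposition_unique[OF q1] by (rule ex_ex1I) auto
  ultimately show ?thesis
    using act_W[OF char] by (auto simp: W_def intro: Fspan_zero Fspan_add Fspan_smult)
qed

end
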